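(* Let $t\ge 2$ be an integer and let $G$ be a finite simple graph. Then \[ N(G,K_t)\;\le\;\sum_{e\in E(G)}\frac{\binom{p(e)+1}{t}}{\binom{p(e)+1}{2}}\;=\;\frac{1}{\binom{t}{2}}\sum_{e\in E(G)}\binom{p(e)-1}{t-2}. \] If $t=2$, equality always holds. If $t\ge 3$, equality holds if and only if every connected component of $G$ is either a complete graph or contains no path of length $t-1$.
   Context: $N(G,K_t)$ denotes the number of subgraphs of $G$ isomorphic to $K_t$. The length of a path is its number of edges. For an edge $e\in E(G)$, $p(e)$ denotes the length of a longest path in $G$ containing the edge $e$ (so $p(e)\ge 1$). Binomial coefficients $\binom{a}{b}$ with $0\le a<b$ are $0$. *)

theory Defs
  imports Complex_Main
begin

definition simple_graph :: "'a set \<Rightarrow> 'a set set \<Rightarrow> bool" where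
  "simple_graph V E \<longleftrightarrow> finite V \<and> (\<forall>e\<in>E. e \<subseteq> V \<and> card e = 2)"

definition adj :: "'a set set \<Rightarrow> 'a \<Rightarrow> 'a \<Rightarrow> bool" where
  "adj E u v \<longleftrightarrow> {u, v} \<in> E"

text \<open>A path is a nonempty list of distinct vertices with consecutive vertices adjacent;
  its length is its number of edges, i.e. length xs - 1.\<close>
definition is_path :: "'a set \<Rightarrow> 'a set set \<Rightarrow> 'a list \<Rightarrow> bool" where
  "is_path V E xs \<longleftrightarrow> xs \<noteq> [] \<and> distinct xs \<and> set xs \<subseteq> V \<and>
     (\<forall>i. Suc i < length xs \<longrightarrow> adj E (xs ! i) (xs ! Suc i))"

definition path_contains_edge :: "'a list \<Rightarrow> 'a set \<Rightarrow> bool" where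
  "path_contains_edge xs e \<longleftrightarrow> (\<exists>i. Suc i < length xs \<and> {xs ! i, xs ! Suc i} = e)"

definition longest_path_through :: "'a set \<Rightarrow> 'a set set \<Rightarrow> 'a set \<Rightarrow> nat" where
  "longest_path_through V E e =
     Max {length xs - 1 | xs. is_path V E xs \<and> path_contains_edge xs e}"

text \<open>N(G,K_t): number of subgraphs isomorphic to K_t, i.e. number of t-cliques.\<close>
definition clique_count :: "'a set \<Rightarrow> 'a set set \<Rightarrow> nat \<Rightarrow> nat" where
  "clique_count V E t =
     card {S. S \<subseteq> V \<and> card S = t \<and> (\<forall>u\<in>S. \<forall>v\<in>S. u \<noteq> v \<longrightarrow> adj E u v)}"

definition components :: "'a set \<Rightarrow> 'a set set \<Rightarrow> 'a set set" where
  "components V E = {{u \<in> V. (adj E)\<^sup>*\<^sup>* v u} | v. v \<in> V}"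

definition is_complete_on :: "'a set set \<Rightarrow> 'a set \<Rightarrow> bool" where
  "is_complete_on E C \<longleftrightarrow> (\<forall>u\<in>C. \<forall>v\<in>C. u \<noteq> v \<longrightarrow> adj E u v)"

definition has_path_of_length_in :: "'a set \<Rightarrow> 'a set set \<Rightarrow> 'a set \<Rightarrow> nat \<Rightarrow> bool" where
  "has_path_of_length_in V E C k \<longleftrightarrow> (\<exists>xs. is_path V E xs \<and> set xs \<subseteq> C \<and> length xs = k + 1)"

end

theory Submission
  imports Defs
begin

text \<open>
  Induction on the number of vertices. Let P be a longest path, with L edges. If L < t - 1,
  there are no t-cliques and every weight vanishes. If an end x of P has d \<le> L/2 neighbours,
  all of them lie on P, so every edge at x lies on a path of length L (reverse the initial segment
  of P up to the neighbour); the at most C(d, t-1) cliques through x weigh strictly less than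
  these d edges, and deleting x gives the strict inequality. Otherwise both ends have more than
  L/2 neighbours on P, so (Posa) some neighbour of the first vertex follows a neighbour of the
  last one, and the vertices of P span a cycle. By maximality of P they form a whole component C
  in which every edge has p(e) = L; counting pairs (edge, clique) inside C bounds the cliques of C
  by the weight of its edges, with equality exactly when C is complete. Delete C and induct.
\<close>

section \<open>Binomial estimates\<close>

lemma Suc_choose_mult_choose_two:
  assumes "t \<ge> 2" "k \<ge> 1"
  shows "(Suc k choose t) * (t choose 2) = (Suc k choose 2) * ((k - 1) choose (t - 2))"
proof (cases "t \<le> Suc k")
  case True
  then show ?thesis using choose_mult[of 2 t "Suc k"] assms by (simp add: numeral_2_eq_2)
next
  case False
  then have "Suc k choose t = 0" "(k - 1) choose (t - 2) = 0"
    using assms by auto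
  then show ?thesis by (simp only: mult_0 mult_0_right)
qed

lemma choose_Suc_mult: "(n choose Suc k) * Suc k = (n choose k) * (n - k)"
  using binomial_absorption[of k n] binomial_absorb_comp[of n k] by (simp add: mult.commute)

lemma power_two_mult_choose_le: "2 ^ k * (n choose k) \<le> (2 * n) choose k"
proof (induction k)
  case 0
  then show ?case by simp
next
  case (Suc k)
  have "2 ^ Suc k * (n choose Suc k) * Suc k = 2 * 2 ^ k * ((n choose Suc k) * Suc k)"
    by (simp only: mult_ac power_Suc)
  also have "\<dots> = 2 * (2 ^ k * (n choose k)) * (n - k)"
    unfolding choose_Suc_mult by (simp only: mult_ac)
  also have "\<dots> \<le> 2 * ((2 * n) choose k) * (n - k)"
    using Suc.IH by simp
  also have "\<dots> \<le> ((2 * n) choose k) * (2 * n - k)"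
  proof -
    have "2 * (n - k) \<le> 2 * n - k"
      by arith
    then show ?thesis
      using mult_le_mono2[of "2 * (n - k)" "2 * n - k" "(2 * n) choose k"] by (simp add: mult_ac)
  qed
  also have "\<dots> = ((2 * n) choose Suc k) * Suc k"
    by (rule choose_Suc_mult[symmetric])
  finally show ?case
    by (metis mult_le_cancel2 zero_less_Suc)
qed

lemma mult_choose_less_double_choose:
  assumes "k \<ge> 1" "2 * m < n" "k \<le> n"
  shows "(k + 2) * (m choose k) < 2 * (n choose k)"
proof (cases "m < k")
  case True
  then show ?thesis
    using assms(3) by (simp add: binomial_eq_0)
next
  case False
  have "k + 2 < 2 * 2 ^ k"
    using less_exp[of k] assms(1) by linarith
  moreover have "0 < m choose k"
    using False by simp
  ultimately have "(k + 2) * (m choose k) < 2 * 2 ^ k * (m choose k)"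
    by (rule mult_less_mono1)
  also have "\<dots> = 2 * (2 ^ k * (m choose k))"
    by simp
  also have "\<dots> \<le> 2 * ((2 * m) choose k)"
    using power_two_mult_choose_le by simp
  also have "\<dots> \<le> 2 * (n choose k)"
    using binomial_right_mono[of "2 * m" n k] assms(2) by simp
  finally show ?thesis .
qed

definition edge_weight :: "nat \<Rightarrow> nat \<Rightarrow> real" where
  "edge_weight t k = real (Suc k choose t) / real (Suc k choose 2)"

lemma edge_weight_eq:
  assumes "t \<ge> 2" "k \<ge> 1"
  shows "edge_weight t k = real ((k - 1) choose (t - 2)) / real (t choose 2)"
proof -
  have "real (Suc k choose t) * real (t choose 2) = real (Suc k choose 2) * real ((k - 1) choose (t - 2))"
    using Suc_choose_mult_choose_two[OF assms] by (metis of_nat_mult)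
  moreover have "real (Suc k choose 2) > 0" "real (t choose 2) > 0"
    using assms by simp_all
  ultimately show ?thesis
    unfolding edge_weight_def by (simp add: field_simps)
qed

lemma edge_weight_mono:
  assumes "t \<ge> 2" "1 \<le> k" "k \<le> k'"
  shows "edge_weight t k \<le> edge_weight t k'"
proof -
  have "(k - 1) choose (t - 2) \<le> (k' - 1) choose (t - 2)"
    using binomial_right_mono assms(3) by simp
  then show ?thesis
    using edge_weight_eq[OF assms(1,2)] edge_weight_eq[OF assms(1)] assms
    by (simp add: divide_right_mono)
qed

lemma edge_weight_eq_0: "Suc k < t \<Longrightarrow> edge_weight t k = 0"
  unfolding edge_weight_def by simp

lemma edge_weight_two: "k \<ge> 1 \<Longrightarrow> edge_weight 2 k = 1"
  unfolding edge_weight_def by simp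

lemma choose_less_mult_edge_weight:
  assumes "t \<ge> 3" "1 \<le> d" "2 * d \<le> L" "t - 1 \<le> L"
  shows "real (d choose (t - 1)) < real d * edge_weight t L"
proof -
  define k where "k = t - 2"
  have k: "k \<ge> 1" "t = k + 2"
    using assms(1) by (auto simp: k_def)
  have two: "(t choose 2) * 2 = t * (t - 1)"
    using times_binomial_minus1_eq[of 2 t] times_binomial_minus1_eq[of 1 "t - 1"] assms(1)
    by (simp add: mult.commute)
  have absorb: "(t - 1) * (d choose (t - 1)) = d * ((d - 1) choose k)"
    using times_binomial_minus1_eq[of "t - 1" d] k by simp
  have "(d choose (t - 1)) * (t choose 2) * 2 = (d choose (t - 1)) * (t * (t - 1))"
    by (simp only: mult.assoc two)
  also have "\<dots> = t * ((t - 1) * (d choose (t - 1)))"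
    by (simp only: mult_ac)
  also have "\<dots> = d * (t * ((d - 1) choose k))"
    by (simp only: absorb mult.left_commute)
  also have "\<dots> < d * (2 * ((L - 1) choose k))"
    using mult_choose_less_double_choose[of k "d - 1" "L - 1"] k assms(2-4) by simp
  finally have "(d choose (t - 1)) * (t choose 2) < d * ((L - 1) choose k)"
    by simp
  then have "real (d choose (t - 1)) * real (t choose 2) < real d * real ((L - 1) choose k)"
    by (metis of_nat_less_iff of_nat_mult)
  moreover have "real (t choose 2) > 0"
    using assms(1) by simp
  moreover have "edge_weight t L = real ((L - 1) choose k) / real (t choose 2)"
    using edge_weight_eq[of t L] assms unfolding k_def by simp
  ultimately show ?thesis
    by (simp add: pos_less_divide_eq)
qed

section \<open>Paths and longest paths\<close>

lemma adj_commute: "adj E u v \<longleftrightarrow> adj E v u"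
  by (simp add: adj_def insert_commute)

lemma adjD:
  assumes "simple_graph V E" "adj E u v"
  shows "u \<in> V" "v \<in> V" "u \<noteq> v"
  using assms unfolding simple_graph_def adj_def by (auto simp: card_2_iff)

lemma edgeE:
  assumes "simple_graph V E" "e \<in> E"
  obtains u v where "e = {u, v}" "adj E u v"
  using assms unfolding simple_graph_def adj_def by (auto simp: card_2_iff)

lemma edge_at_vertexE:
  assumes "simple_graph V E" "e \<in> E" "x \<in> e"
  obtains z where "e = {x, z}" "adj E x z"
proof -
  obtain u v where uv: "e = {u, v}" "adj E u v"
    using edgeE[OF assms(1,2)] .
  then have "x = u \<or> x = v"
    using assms(3) by blast
  then show ?thesis
  proof
    assume "x = u"
    then show ?thesis using that uv by blast
  next
    assume "x = v"
    then show ?thesis using that[of u] uv by (simp add: adj_commute insert_commute)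
  qed
qed

lemma finite_edges: "simple_graph V E \<Longrightarrow> finite E"
  unfolding simple_graph_def by (metis Pow_iff finite_Pow_iff finite_subset subsetI)

lemma is_path_iff:
  "is_path V E xs \<longleftrightarrow> xs \<noteq> [] \<and> distinct xs \<and> set xs \<subseteq> V \<and> successively (adj E) xs"
  unfolding is_path_def successively_conv_nth by blast

lemma path_contains_edge_iff:
  "path_contains_edge xs e \<longleftrightarrow> (\<exists>as x y bs. xs = as @ x # y # bs \<and> e = {x, y})"
proof
  assume "path_contains_edge xs e"
  then obtain i where i: "Suc i < length xs" "{xs ! i, xs ! Suc i} = e"
    unfolding path_contains_edge_def by blast
  have "xs = take i xs @ xs ! i # xs ! Suc i # drop (Suc (Suc i)) xs"
    using i(1) by (metis Cons_nth_drop_Suc Suc_lessD append_take_drop_id)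
  then show "\<exists>as x y bs. xs = as @ x # y # bs \<and> e = {x, y}"
    using i(2) by blast
next
  assume "\<exists>as x y bs. xs = as @ x # y # bs \<and> e = {x, y}"
  then obtain as x y bs where "xs = as @ x # y # bs" "e = {x, y}"
    by blast
  then show "path_contains_edge xs e"
    unfolding path_contains_edge_def by (intro exI[of _ "length as"]) (auto simp: nth_append)
qed

lemma is_path_rev: "is_path V E xs \<Longrightarrow> is_path V E (rev xs)"
  unfolding is_path_iff by (auto simp: adj_commute cong: successively_cong)

lemma is_path_take: "is_path V E xs \<Longrightarrow> k \<ge> 1 \<Longrightarrow> is_path V E (take k xs)"
  unfolding is_path_iff
  by (metis append_take_drop_id distinct_take not_one_le_zero set_take_subset
      subset_trans successively_append_iff take_eq_Nil)

lemma has_path_of_length_in_take: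
  assumes "is_path V E P" "set P \<subseteq> C" "1 \<le> t" "t \<le> length P"
  shows "has_path_of_length_in V E C (t - 1)"
  unfolding has_path_of_length_in_def
  using is_path_take[OF assms(1,3)] assms(2-4) set_take_subset[of t P]
  by (intro exI[of _ "take t P"]) auto

lemma is_path_Cons:
  "is_path V E xs \<Longrightarrow> z \<in> V \<Longrightarrow> z \<notin> set xs \<Longrightarrow> adj E z (hd xs) \<Longrightarrow> is_path V E (z # xs)"
  unfolding is_path_iff by (auto simp: successively_Cons)

lemma is_path_edge:
  assumes "simple_graph V E" "adj E u v"
  shows "is_path V E [u, v]" "path_contains_edge [u, v] {u, v}"
  using adjD[OF assms] assms(2) unfolding is_path_iff path_contains_edge_iff
  by (auto intro!: exI[of _ "[]"])

lemma adj_hd_nth_1: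
  assumes "is_path V E xs" "length xs \<ge> 2"
  shows "adj E (hd xs) (xs ! 1)"
  using assms unfolding is_path_def by (simp add: hd_conv_nth)

lemma rtranclp_adj_hd_path:
  assumes "is_path V E xs" "y \<in> set xs"
  shows "(adj E)\<^sup>*\<^sup>* (hd xs) y"
proof -
  have "(adj E)\<^sup>*\<^sup>* (hd xs) y" if "successively (adj E) xs" "y \<in> set xs" for xs
    using that
  proof (induction xs)
    case (Cons x ys)
    show ?case
    proof (cases "ys = [] \<or> y = x")
      case True
      then show ?thesis using Cons.prems by auto
    next
      case False
      then have "successively (adj E) ys" "adj E x (hd ys)" "y \<in> set ys"
        using Cons.prems by (auto simp: successively_Cons)
      then show ?thesis
        using Cons.IH False by (auto intro: converse_rtranclp_into_rtranclp)
    qed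
  qed simp
  then show ?thesis
    using assms unfolding is_path_iff by blast
qed

lemma length_path_le_card:
  assumes "finite V" "is_path V E xs"
  shows "length xs \<le> card V"
  using assms unfolding is_path_def by (metis card_mono distinct_card)

lemma finite_paths:
  assumes "finite V"
  shows "finite {xs. is_path V E xs}"
proof (rule finite_subset)
  show "{xs. is_path V E xs} \<subseteq> {xs. set xs \<subseteq> V \<and> length xs \<le> card V}"
    using length_path_le_card[OF assms] unfolding is_path_def by blast
  show "finite {xs. set xs \<subseteq> V \<and> length xs \<le> card V}"
    using finite_lists_length_le[OF assms] .
qed

lemma longest_path_through_ge:
  assumes "simple_graph V E" "is_path V E xs" "path_contains_edge xs e"
  shows "length xs - 1 \<le> longest_path_through V E e"
proof -
  have "finite {length xs - 1 | xs. is_path V E xs \<and> path_contains_edge xs e}"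
    using finite_paths[of V E] assms(1) unfolding simple_graph_def by auto
  then show ?thesis
    unfolding longest_path_through_def using assms by (intro Max_ge) auto
qed

lemma longest_path_through_le:
  assumes "simple_graph V E" "e \<in> E"
    and "\<And>xs. is_path V E xs \<Longrightarrow> path_contains_edge xs e \<Longrightarrow> length xs - 1 \<le> k"
  shows "longest_path_through V E e \<le> k"
proof -
  obtain u v where "e = {u, v}" "adj E u v"
    using edgeE[OF assms(1,2)] .
  then have "is_path V E [u, v]" "path_contains_edge [u, v] e"
    using is_path_edge[OF assms(1)] by auto
  moreover have "finite {length xs - 1 | xs. is_path V E xs \<and> path_contains_edge xs e}"
    using finite_paths[of V E] assms(1) unfolding simple_graph_def by auto
  ultimately show ?thesis
    unfolding longest_path_through_def using assms(3) by (subst Max_le_iff) auto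
qed

lemma longest_path_through_ge_1:
  assumes "simple_graph V E" "e \<in> E"
  shows "1 \<le> longest_path_through V E e"
proof -
  obtain u v where "e = {u, v}" "adj E u v"
    using edgeE[OF assms] .
  then show ?thesis
    using is_path_edge[OF assms(1)] longest_path_through_ge[OF assms(1)] by fastforce
qed

definition is_longest_path :: "'a set \<Rightarrow> 'a set set \<Rightarrow> 'a list \<Rightarrow> bool" where
  "is_longest_path V E P \<longleftrightarrow> is_path V E P \<and> (\<forall>xs. is_path V E xs \<longrightarrow> length xs \<le> length P)"

lemma longest_path_exists:
  assumes "simple_graph V E" "is_path V E ys"
  obtains P where "is_longest_path V E P"
proof -
  have "\<forall>xs. is_path V E xs \<longrightarrow> length xs < Suc (card V)"
    using assms(1) length_path_le_card unfolding simple_graph_def by (blast intro: le_imp_less_Suc)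
  then show ?thesis
    using ex_has_greatest_nat[of "is_path V E" ys length "Suc (card V)"] assms(2) that
    unfolding is_longest_path_def by blast
qed

lemma is_longest_path_rev: "is_longest_path V E P \<Longrightarrow> is_longest_path V E (rev P)"
  unfolding is_longest_path_def using is_path_rev[of V E P] length_rev[of P] by metis

lemma longest_path_hd_neighbour:
  assumes "simple_graph V E" "is_longest_path V E P" "adj E (hd P) z"
  shows "z \<in> set P"
proof (rule ccontr)
  assume "z \<notin> set P"
  moreover have "z \<in> V"
    using adjD(2)[OF assms(1,3)] .
  moreover have "adj E z (hd P)"
    using assms(3) by (simp add: adj_commute)
  moreover have "is_path V E P"
    using assms(2) unfolding is_longest_path_def by blast
  ultimately have "is_path V E (z # P)"
    by (intro is_path_Cons)
  then have "length (z # P) \<le> length P"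
    using assms(2) unfolding is_longest_path_def by blast
  then show False
    by simp
qed

lemma path_rotate:
  assumes "is_path V E xs" "0 < i" "i < length xs" "adj E (hd xs) (xs ! i)"
  shows "is_path V E (rev (take i xs) @ drop i xs)"
    and "path_contains_edge (rev (take i xs) @ drop i xs) {hd xs, xs ! i}"
proof -
  have d: "distinct xs" "set xs \<subseteq> V" "successively (adj E) xs" "xs \<noteq> []"
    using assms(1) unfolding is_path_iff by auto
  have s: "successively (adj E) (take i xs)" "successively (adj E) (drop i xs)"
    using d(3) by (metis append_take_drop_id successively_append_iff)+
  have lt: "last (rev (take i xs)) = hd xs"
    using assms(2) d(4) by (simp add: hd_take last_rev)
  have hdd: "hd (drop i xs) = xs ! i"
    using assms(3) by (simp add: hd_drop_conv_nth)
  have "distinct (rev (take i xs) @ drop i xs)"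
    using d(1) by (metis append_take_drop_id distinct_append distinct_rev set_rev)
  moreover have "set (rev (take i xs) @ drop i xs) = set xs"
    by (metis append_take_drop_id set_append set_rev)
  moreover have "successively (adj E) (rev (take i xs) @ drop i xs)"
    using s lt hdd assms(4)
    by (auto simp: successively_append_iff adj_commute cong: successively_cong)
  ultimately show "is_path V E (rev (take i xs) @ drop i xs)"
    using d unfolding is_path_iff by auto
  have "rev (take i xs) @ drop i xs = butlast (rev (take i xs)) @ hd xs # xs ! i # drop (Suc i) xs"
    using lt assms(2,3) d(4)
    by (metis Cons_nth_drop_Suc append.assoc append_butlast_last_id append_Cons append_Nil
        rev_is_Nil_conv take_eq_Nil2 not_gr_zero)
  then show "path_contains_edge (rev (take i xs) @ drop i xs) {hd xs, xs ! i}"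
    unfolding path_contains_edge_iff by blast
qed

lemma longest_path_hd_neighbour_nth:
  assumes sg: "simple_graph V E" and P: "is_longest_path V E P" and z: "adj E (hd P) z"
  obtains i where "Suc i < length P" "P ! Suc i = z"
proof -
  obtain j where j: "j < length P" "P ! j = z"
    using longest_path_hd_neighbour[OF sg P z] by (meson in_set_conv_nth)
  have "P \<noteq> []"
    using P unfolding is_longest_path_def is_path_def by blast
  have "j \<noteq> 0"
  proof
    assume "j = 0"
    then have "z = hd P"
      using j(2) \<open>P \<noteq> []\<close> by (simp add: hd_conv_nth)
    then show False
      using adjD(3)[OF sg z] by simp
  qed
  then obtain i where "j = Suc i"
    using not0_implies_Suc by blast
  then show ?thesis
    using that j by blast
qed

lemma longest_path_through_at_hd:
  assumes sg: "simple_graph V E" and P: "is_longest_path V E P" and e: "e \<in> E" "hd P \<in> e"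
  shows "length P - 1 \<le> longest_path_through V E e"
proof -
  obtain z where z: "e = {hd P, z}" "adj E (hd P) z"
    using edge_at_vertexE[OF sg e] .
  obtain i where i: "Suc i < length P" "P ! Suc i = z"
    using longest_path_hd_neighbour_nth[OF sg P z(2)] .
  have path: "is_path V E P"
    using P unfolding is_longest_path_def by blast
  note rotated = path_rotate[OF path zero_less_Suc i(1), unfolded i(2), OF z(2)]
  have "length (rev (take (Suc i) P) @ drop (Suc i) P) - 1 \<le> longest_path_through V E e"
    using longest_path_through_ge[OF sg rotated(1)] rotated(2) z(1) by simp
  then show ?thesis
    using i(1) by simp
qed

lemma longest_path_through_le_longest:
  assumes sg: "simple_graph V E" and P: "is_longest_path V E P" and e: "e \<in> E"
  shows "longest_path_through V E e \<le> length P - 1"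
  using sg e by (rule longest_path_through_le) (use P in \<open>auto simp: is_longest_path_def\<close>)

section \<open>Deleting vertices\<close>

definition edges_avoiding :: "'a set set \<Rightarrow> 'a set \<Rightarrow> 'a set set" where
  "edges_avoiding E X = {e \<in> E. e \<inter> X = {}}"

lemma simple_graph_remove: "simple_graph V E \<Longrightarrow> simple_graph (V - X) (edges_avoiding E X)"
  unfolding simple_graph_def edges_avoiding_def by auto

lemma adj_edges_avoiding: "adj (edges_avoiding E X) u v \<longleftrightarrow> adj E u v \<and> u \<notin> X \<and> v \<notin> X"
  unfolding adj_def edges_avoiding_def by auto

lemma is_path_remove:
  "is_path (V - X) (edges_avoiding E X) xs \<longleftrightarrow> is_path V E xs \<and> set xs \<inter> X = {}"
proof
  assume "is_path (V - X) (edges_avoiding E X) xs"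
  then show "is_path V E xs \<and> set xs \<inter> X = {}"
    unfolding is_path_iff
    by (auto simp: adj_edges_avoiding intro: successively_mono[of "adj (edges_avoiding E X)"])
next
  assume xs: "is_path V E xs \<and> set xs \<inter> X = {}"
  then have "successively (adj (edges_avoiding E X)) xs"
    unfolding is_path_iff by (auto simp: adj_edges_avoiding intro: successively_mono[of "adj E"])
  then show "is_path (V - X) (edges_avoiding E X) xs"
    using xs unfolding is_path_iff by auto
qed

lemma longest_path_through_remove_le:
  assumes sg: "simple_graph V E" and e: "e \<in> edges_avoiding E X"
  shows "longest_path_through (V - X) (edges_avoiding E X) e \<le> longest_path_through V E e"
  using simple_graph_remove[OF sg] e
proof (rule longest_path_through_le)
  fix xs
  assume "is_path (V - X) (edges_avoiding E X) xs" "path_contains_edge xs e"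
  then show "length xs - 1 \<le> longest_path_through V E e"
    using longest_path_through_ge[OF sg] by (simp add: is_path_remove)
qed

definition adj_closed :: "'a set set \<Rightarrow> 'a set \<Rightarrow> bool" where
  "adj_closed E C \<longleftrightarrow> (\<forall>u v. adj E u v \<longrightarrow> u \<in> C \<longrightarrow> v \<in> C)"

lemma adj_closedD:
  assumes "adj_closed E C" "adj E u v"
  shows "u \<in> C \<longleftrightarrow> v \<in> C"
  using assms adj_commute[of E u v] unfolding adj_closed_def by blast

lemma adj_closed_rtranclp:
  assumes "adj_closed E C" "(adj E)\<^sup>*\<^sup>* u v"
  shows "u \<in> C \<longleftrightarrow> v \<in> C"
  using assms(2) by induction (use adj_closedD[OF assms(1)] in auto)

lemma path_inside_or_outside:
  assumes "adj_closed E C" "is_path V E xs"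
  shows "set xs \<subseteq> C \<or> set xs \<inter> C = {}"
  using adj_closed_rtranclp[OF assms(1) rtranclp_adj_hd_path[OF assms(2)]] by blast

lemma edge_inside_or_outside:
  assumes "simple_graph V E" "adj_closed E C" "e \<in> E"
  shows "e \<subseteq> C \<or> e \<inter> C = {}"
proof -
  obtain u v where "e = {u, v}" "adj E u v"
    using edgeE[OF assms(1,3)] .
  then show ?thesis
    using adj_closedD[OF assms(2)] by blast
qed

lemma longest_path_through_remove_closed:
  assumes sg: "simple_graph V E" and C: "adj_closed E C" and e: "e \<in> edges_avoiding E C"
  shows "longest_path_through (V - C) (edges_avoiding E C) e = longest_path_through V E e"
proof (rule antisym)
  show "longest_path_through (V - C) (edges_avoiding E C) e \<le> longest_path_through V E e"
    using longest_path_through_remove_le[OF sg e] .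
  have "e \<in> E" "e \<inter> C = {}"
    using e by (auto simp: edges_avoiding_def)
  then show "longest_path_through V E e \<le> longest_path_through (V - C) (edges_avoiding E C) e"
  proof (intro longest_path_through_le[OF sg])
    fix xs
    assume xs: "is_path V E xs" "path_contains_edge xs e"
    have "e \<subseteq> set xs" "e \<noteq> {}"
      using xs(2) unfolding path_contains_edge_iff by auto
    then have "set xs \<inter> C = {}"
      using path_inside_or_outside[OF C xs(1)] \<open>e \<inter> C = {}\<close> by blast
    then show "length xs - 1 \<le> longest_path_through (V - C) (edges_avoiding E C) e"
      using longest_path_through_ge[OF simple_graph_remove[OF sg] _ xs(2)] xs(1)
      by (simp add: is_path_remove)
  qed
qed

lemma rtranclp_adj_remove_closed:
  assumes "adj_closed E C" "u \<notin> C"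
  shows "(adj (edges_avoiding E C))\<^sup>*\<^sup>* u v \<longleftrightarrow> (adj E)\<^sup>*\<^sup>* u v"
proof
  assume "(adj (edges_avoiding E C))\<^sup>*\<^sup>* u v"
  then show "(adj E)\<^sup>*\<^sup>* u v"
    by induction (simp_all add: adj_edges_avoiding rtranclp.rtrancl_into_rtrancl)
next
  assume "(adj E)\<^sup>*\<^sup>* u v"
  then show "(adj (edges_avoiding E C))\<^sup>*\<^sup>* u v"
  proof induction
    case (step y z)
    then have "y \<notin> C" "z \<notin> C"
      using adj_closed_rtranclp[OF assms(1)] adj_closedD[OF assms(1)] assms(2) by blast+
    then show ?case
      using step by (simp add: adj_edges_avoiding rtranclp.rtrancl_into_rtrancl)
  qed simp
qed

lemma rtranclp_adj_commute: "(adj E)\<^sup>*\<^sup>* u v \<Longrightarrow> (adj E)\<^sup>*\<^sup>* v u"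
proof -
  have "symp (adj E)"
    by (rule sympI) (simp add: adj_commute)
  then show "(adj E)\<^sup>*\<^sup>* u v \<Longrightarrow> (adj E)\<^sup>*\<^sup>* v u"
    by (meson symp_rtranclp sympD)
qed

lemma components_remove_closed:
  assumes closed: "adj_closed E C" and "C \<subseteq> V" "x \<in> C" and reach: "\<forall>u\<in>C. (adj E)\<^sup>*\<^sup>* x u"
  shows "components V E = insert C (components (V - C) (edges_avoiding E C))"
proof -
  let ?comp = "\<lambda>v. {u \<in> V. (adj E)\<^sup>*\<^sup>* v u}"
  have inside: "?comp v = C" if "v \<in> C" for v
  proof -
    have "(adj E)\<^sup>*\<^sup>* v u" if "u \<in> C" for u
      using reach \<open>v \<in> C\<close> that by (meson rtranclp_adj_commute rtranclp_trans)
    then show ?thesis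
      using adj_closed_rtranclp[OF closed, of v] \<open>v \<in> C\<close> \<open>C \<subseteq> V\<close> by blast
  qed
  have outside: "?comp v = {u \<in> V - C. (adj (edges_avoiding E C))\<^sup>*\<^sup>* v u}" if "v \<notin> C" for v
    using rtranclp_adj_remove_closed[OF closed that] adj_closed_rtranclp[OF closed, of v] that
    by blast
  have "components V E = ?comp ` C \<union> ?comp ` (V - C)"
    unfolding components_def using \<open>C \<subseteq> V\<close> by blast
  also have "?comp ` C = {C}"
    using inside \<open>x \<in> C\<close> by blast
  also have "?comp ` (V - C) = components (V - C) (edges_avoiding E C)"
    unfolding components_def using outside by (auto simp: image_def)
  finally show ?thesis
    by simp
qed

section \<open>Cliques\<close>

definition cliques :: "'a set \<Rightarrow> 'a set set \<Rightarrow> nat \<Rightarrow> 'a set set" where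
  "cliques V E t = {S. S \<subseteq> V \<and> card S = t \<and> is_complete_on E S}"

lemma clique_count_eq_card_cliques: "clique_count V E t = card (cliques V E t)"
  unfolding clique_count_def cliques_def is_complete_on_def by simp

lemma finite_cliques: "finite V \<Longrightarrow> finite (cliques V E t)"
  unfolding cliques_def by (rule finite_subset[of _ "Pow V"]) auto

lemma cliques_remove: "cliques (V - X) (edges_avoiding E X) t = {S \<in> cliques V E t. S \<inter> X = {}}"
  unfolding cliques_def is_complete_on_def by (auto simp: adj_edges_avoiding)

lemma card_cliques_remove:
  assumes "finite V"
  shows "card (cliques V E t)
    = card {S \<in> cliques V E t. S \<inter> X \<noteq> {}} + card (cliques (V - X) (edges_avoiding E X) t)"
proof -
  have "card {S \<in> cliques V E t. S \<inter> X \<noteq> {}} + card {S \<in> cliques V E t. S \<inter> X = {}}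
      = card ({S \<in> cliques V E t. S \<inter> X \<noteq> {}} \<union> {S \<in> cliques V E t. S \<inter> X = {}})"
    using finite_cliques[OF assms] by (intro card_Un_disjoint[symmetric]) auto
  also have "{S \<in> cliques V E t. S \<inter> X \<noteq> {}} \<union> {S \<in> cliques V E t. S \<inter> X = {}} = cliques V E t"
    by blast
  finally show ?thesis
    unfolding cliques_remove by simp
qed

lemma clique_inside_or_outside:
  assumes "adj_closed E C" "S \<in> cliques V E t" "t \<ge> 1"
  shows "S \<subseteq> C \<or> S \<inter> C = {}"
proof -
  have "S \<noteq> {}" and complete: "is_complete_on E S"
    using assms(2,3) unfolding cliques_def by auto
  then obtain u where "u \<in> S"
    by blast
  have "v \<in> C \<longleftrightarrow> u \<in> C" if "v \<in> S" for v
    using adj_closedD[OF assms(1)] complete \<open>u \<in> S\<close> that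
    unfolding is_complete_on_def by (cases "v = u") auto
  then show ?thesis
    by blast
qed

lemma card_cliques_remove_closed:
  assumes "finite V" "adj_closed E C" "t \<ge> 1"
  shows "card (cliques V E t)
    = card {S \<in> cliques V E t. S \<subseteq> C} + card (cliques (V - C) (edges_avoiding E C) t)"
proof -
  have "{S \<in> cliques V E t. S \<inter> C \<noteq> {}} = {S \<in> cliques V E t. S \<subseteq> C}"
  proof (intro Collect_cong conj_cong refl)
    fix S
    assume S: "S \<in> cliques V E t"
    then have "S \<noteq> {}"
      using assms(3) unfolding cliques_def by auto
    then show "S \<inter> C \<noteq> {} \<longleftrightarrow> S \<subseteq> C"
      using clique_inside_or_outside[OF assms(2) S assms(3)] by auto
  qed
  then show ?thesis
    using card_cliques_remove[OF assms(1), of E t C] by simp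
qed

lemma clique_is_path:
  assumes "S \<in> cliques V E t" "t \<ge> 1"
  shows "\<exists>xs. is_path V E xs \<and> length xs = t"
proof -
  have S: "card S = t" "S \<subseteq> V" "is_complete_on E S"
    using assms(1) unfolding cliques_def by auto
  then have "finite S"
    using assms(2) card.infinite by fastforce
  then obtain xs where xs: "set xs = S" "distinct xs"
    using finite_distinct_list by blast
  have "sorted_wrt (adj E) xs"
    unfolding sorted_wrt_iff_nth_less
    using xs S(3) unfolding is_complete_on_def by (auto simp: nth_eq_iff_index_eq)
  then have "successively (adj E) xs"
    by (rule successively_if_sorted_wrt)
  moreover have "length xs = t"
    using xs S(1) distinct_card by metis
  ultimately show ?thesis
    using xs S(2) assms(2) unfolding is_path_iff by (intro exI[of _ xs]) auto
qed

lemma edges_within_complete: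
  assumes "simple_graph V E" "is_complete_on E S"
  shows "{e \<in> E. e \<subseteq> S} = {e. e \<subseteq> S \<and> card e = 2}"
proof
  show "{e \<in> E. e \<subseteq> S} \<subseteq> {e. e \<subseteq> S \<and> card e = 2}"
    using assms(1) unfolding simple_graph_def by blast
  show "{e. e \<subseteq> S \<and> card e = 2} \<subseteq> {e \<in> E. e \<subseteq> S}"
    using assms(2) unfolding is_complete_on_def adj_def by (auto simp: card_2_iff)
qed

lemma cliques_two:
  assumes "simple_graph V E"
  shows "cliques V E 2 = E"
proof
  show "cliques V E 2 \<subseteq> E"
    unfolding cliques_def is_complete_on_def adj_def by (auto simp: card_2_iff)
  show "E \<subseteq> cliques V E 2"
    using assms unfolding cliques_def is_complete_on_def adj_def simple_graph_def
    by (auto simp: card_2_iff insert_commute)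
qed

definition neighbours :: "'a set set \<Rightarrow> 'a \<Rightarrow> 'a set" where
  "neighbours E x = {v. adj E x v}"

lemma finite_neighbours: "simple_graph V E \<Longrightarrow> finite (neighbours E x)"
  unfolding neighbours_def using adjD(2) simple_graph_def
  by (metis (no_types, lifting) finite_subset mem_Collect_eq subsetI)

lemma card_edges_at:
  assumes "simple_graph V E"
  shows "card {e \<in> E. x \<in> e} = card (neighbours E x)"
proof -
  have "{e \<in> E. x \<in> e} = (\<lambda>v. {x, v}) ` neighbours E x"
  proof
    show "(\<lambda>v. {x, v}) ` neighbours E x \<subseteq> {e \<in> E. x \<in> e}"
      unfolding neighbours_def adj_def by auto
    show "{e \<in> E. x \<in> e} \<subseteq> (\<lambda>v. {x, v}) ` neighbours E x"
      using edge_at_vertexE[OF assms] unfolding neighbours_def by blast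
  qed
  moreover have "inj_on (\<lambda>v. {x, v}) (neighbours E x)"
    by (rule inj_onI) (auto simp: doubleton_eq_iff)
  ultimately show ?thesis
    by (simp add: card_image)
qed

lemma card_supersets_le:
  assumes "finite D" "finite e"
  shows "card {S. e \<subseteq> S \<and> S \<subseteq> D \<and> card S = t} \<le> card (D - e) choose (t - card e)"
proof -
  let ?A = "{S. e \<subseteq> S \<and> S \<subseteq> D \<and> card S = t}"
  let ?B = "{X. X \<subseteq> D - e \<and> card X = t - card e}"
  have inj: "inj_on (\<lambda>S. S - e) ?A"
  proof (rule inj_onI)
    fix S T
    assume "S \<in> ?A" "T \<in> ?A" "S - e = T - e"
    then show "S = T"
      by (metis (no_types, lifting) Diff_partition mem_Collect_eq)
  qed
  have "(\<lambda>S. S - e) ` ?A \<subseteq> ?B"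
    using card_Diff_subset[OF assms(2)] by auto
  then have "card ?A \<le> card ?B"
    using card_inj_on_le[OF inj] assms(1) by simp
  also have "\<dots> = card (D - e) choose (t - card e)"
    using n_subsets[of "D - e"] assms(1) by simp
  finally show ?thesis .
qed

lemma card_cliques_containing_le:
  assumes "simple_graph V E"
  shows "card {S \<in> cliques V E t. x \<in> S} \<le> card (neighbours E x) choose (t - 1)"
proof -
  let ?D = "insert x (neighbours E x)"
  have "x \<notin> neighbours E x"
    using adjD(3)[OF assms] unfolding neighbours_def by blast
  then have "card (?D - {x}) = card (neighbours E x)"
    by simp
  moreover have "{S \<in> cliques V E t. x \<in> S} \<subseteq> {S. {x} \<subseteq> S \<and> S \<subseteq> ?D \<and> card S = t}"
    unfolding cliques_def is_complete_on_def neighbours_def by auto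
  then have "card {S \<in> cliques V E t. x \<in> S} \<le> card {S. {x} \<subseteq> S \<and> S \<subseteq> ?D \<and> card S = t}"
    using finite_neighbours[OF assms] by (intro card_mono) auto
  ultimately show ?thesis
    using card_supersets_le[of ?D "{x}" t] finite_neighbours[OF assms] by simp
qed

lemma card_cliques_remove_vertex_le:
  assumes "simple_graph V E"
  shows "card (cliques V E t)
    \<le> (card (neighbours E x) choose (t - 1)) + card (cliques (V - {x}) (edges_avoiding E {x}) t)"
proof -
  have "card (cliques V E t) = card {S \<in> cliques V E t. S \<inter> {x} \<noteq> {}}
      + card (cliques (V - {x}) (edges_avoiding E {x}) t)"
    using assms unfolding simple_graph_def by (blast intro: card_cliques_remove)
  then show ?thesis
    using card_cliques_containing_le[OF assms, of t x] by simp
qed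

lemma double_count_edges_cliques:
  assumes sg: "simple_graph V E"
  shows "(t choose 2) * card {S \<in> cliques V E t. S \<subseteq> C}
    = (\<Sum>e\<in>{e \<in> E. e \<subseteq> C}. card {S \<in> cliques V E t. S \<subseteq> C \<and> e \<subseteq> S})"
proof -
  let ?A = "{S \<in> cliques V E t. S \<subseteq> C}" and ?B = "{e \<in> E. e \<subseteq> C}"
  have finA: "finite ?A"
    using finite_cliques[of V E t] sg unfolding simple_graph_def by simp
  have finB: "finite ?B"
    using finite_edges[OF sg] by simp
  have "card {e \<in> ?B. e \<subseteq> S} = t choose 2" if "S \<in> ?A" for S
  proof -
    have S: "is_complete_on E S" "card S = t" "S \<subseteq> C" "finite S"
      using that sg unfolding cliques_def simple_graph_def by (auto intro: finite_subset)
    then have "{e \<in> ?B. e \<subseteq> S} = {e \<in> E. e \<subseteq> S}"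
      by blast
    also have "\<dots> = {e. e \<subseteq> S \<and> card e = 2}"
      using edges_within_complete[OF sg S(1)] .
    finally show ?thesis
      using n_subsets[OF S(4), of 2] S(2) by simp
  qed
  then have "(t choose 2) * card ?A = (\<Sum>S\<in>?A. card {e \<in> ?B. e \<subseteq> S})"
    by simp
  also have "\<dots> = (\<Sum>S\<in>?A. \<Sum>e\<in>?B. if e \<subseteq> S then 1 else 0)"
    using finB by (simp add: sum.If_cases Int_def)
  also have "\<dots> = (\<Sum>e\<in>?B. \<Sum>S\<in>?A. if e \<subseteq> S then 1 else 0)"
    by (rule sum.swap)
  also have "\<dots> = (\<Sum>e\<in>?B. card {S \<in> ?A. e \<subseteq> S})"
    using finA by (simp add: sum.If_cases Int_def)
  also have "\<dots> = (\<Sum>e\<in>?B. card {S \<in> cliques V E t. S \<subseteq> C \<and> e \<subseteq> S})"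
    by (intro sum.cong refl arg_cong[where f = card]) blast
  finally show ?thesis .
qed

lemma card_cliques_through_edge_le:
  assumes sg: "simple_graph V E" and "finite C" "e \<in> E" "e \<subseteq> C"
  shows "card {S \<in> cliques V E t. S \<subseteq> C \<and> e \<subseteq> S} \<le> (card C - 2) choose (t - 2)"
proof -
  have "card e = 2" "finite e"
    using sg assms(3) unfolding simple_graph_def by (auto intro: card_ge_0_finite)
  have "card {S \<in> cliques V E t. S \<subseteq> C \<and> e \<subseteq> S} \<le> card {S. e \<subseteq> S \<and> S \<subseteq> C \<and> card S = t}"
    using assms(2) by (intro card_mono) (auto simp: cliques_def)
  also have "\<dots> \<le> card (C - e) choose (t - card e)"
    using card_supersets_le[OF assms(2) \<open>finite e\<close>] .
  also have "card (C - e) = card C - 2"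
    using assms(4) \<open>card e = 2\<close> card_Diff_subset[OF \<open>finite e\<close>] by simp
  finally show ?thesis
    using \<open>card e = 2\<close> by simp
qed

lemma card_cliques_through_edge_less:
  assumes sg: "simple_graph V E" and "finite C" "t \<ge> 3" "card C \<ge> t"
    and uw: "adj E u w" "u \<in> C" "w \<in> C" and v: "v \<in> C" "u \<noteq> v" "\<not> adj E u v"
  shows "card {S \<in> cliques V E t. S \<subseteq> C \<and> {u, w} \<subseteq> S} < (card C - 2) choose (t - 2)"
proof -
  have "u \<noteq> w" "v \<noteq> w"
    using adjD(3)[OF sg uw(1)] uw(1) v(3) by auto
  then have sizes: "card (C - {v} - {u, w}) = card C - 3" "card {u, w} = 2"
    using v uw(2,3) assms(2) by (simp_all add: card_Diff_subset)
  have "card {S \<in> cliques V E t. S \<subseteq> C \<and> {u, w} \<subseteq> S}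
      \<le> card {S. {u, w} \<subseteq> S \<and> S \<subseteq> C - {v} \<and> card S = t}"
    using assms(2) v unfolding cliques_def is_complete_on_def by (intro card_mono) auto
  also have "\<dots> \<le> card (C - {v} - {u, w}) choose (t - card {u, w})"
    using card_supersets_le[of "C - {v}" "{u, w}" t] assms(2) by simp
  also have "\<dots> = (card C - 3) choose (t - 2)"
    unfolding sizes ..
  also have "\<dots> < (card C - 2) choose (t - 2)"
  proof -
    have "card C - 2 = Suc (card C - 3)" "t - 2 = Suc (t - 3)"
      using assms(3,4) by auto
    moreover have "0 < (card C - 3) choose (t - 3)"
      using assms(3,4) by simp
    ultimately show ?thesis
      by simp
  qed
  finally show ?thesis .
qed

lemma cliques_within_le:
  assumes sg: "simple_graph V E" and "finite C"
  shows "(t choose 2) * card {S \<in> cliques V E t. S \<subseteq> C}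
    \<le> card {e \<in> E. e \<subseteq> C} * ((card C - 2) choose (t - 2))"
proof -
  have "(\<Sum>e\<in>{e \<in> E. e \<subseteq> C}. card {S \<in> cliques V E t. S \<subseteq> C \<and> e \<subseteq> S})
      \<le> of_nat (card {e \<in> E. e \<subseteq> C}) * ((card C - 2) choose (t - 2))"
    by (rule sum_bounded_above) (use card_cliques_through_edge_le[OF sg assms(2)] in auto)
  then show ?thesis
    unfolding double_count_edges_cliques[OF sg] by simp
qed

lemma cliques_within_less:
  assumes sg: "simple_graph V E" and "finite C" "t \<ge> 3" "card C \<ge> t"
    and nbr: "\<forall>u\<in>C. \<exists>w\<in>C. adj E u w" and "\<not> is_complete_on E C"
  shows "(t choose 2) * card {S \<in> cliques V E t. S \<subseteq> C}
    < card {e \<in> E. e \<subseteq> C} * ((card C - 2) choose (t - 2))"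
proof -
  obtain u v where uv: "u \<in> C" "v \<in> C" "u \<noteq> v" "\<not> adj E u v"
    using assms(6) unfolding is_complete_on_def by blast
  obtain w where w: "w \<in> C" "adj E u w"
    using nbr uv(1) by blast
  let ?f = "\<lambda>e. card {S \<in> cliques V E t. S \<subseteq> C \<and> e \<subseteq> S}"
  have "{u, w} \<in> {e \<in> E. e \<subseteq> C}"
    using w uv(1) unfolding adj_def by simp
  moreover have "?f {u, w} < (card C - 2) choose (t - 2)"
    using card_cliques_through_edge_less[OF sg assms(2-4) w(2) uv(1) w(1) uv(2-4)] .
  moreover have "\<forall>e\<in>{e \<in> E. e \<subseteq> C}. ?f e \<le> (card C - 2) choose (t - 2)"
    using card_cliques_through_edge_le[OF sg assms(2)] by blast
  ultimately have "sum ?f {e \<in> E. e \<subseteq> C} < (\<Sum>e\<in>{e \<in> E. e \<subseteq> C}. (card C - 2) choose (t - 2))"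
    using finite_edges[OF sg] by (intro sum_strict_mono_ex1) auto
  then show ?thesis
    unfolding double_count_edges_cliques[OF sg] by (simp add: mult.commute)
qed

lemma cliques_within_complete:
  assumes sg: "simple_graph V E" and "C \<subseteq> V" "is_complete_on E C" "t \<ge> 2" "card C \<ge> 2"
  shows "(t choose 2) * card {S \<in> cliques V E t. S \<subseteq> C}
    = card {e \<in> E. e \<subseteq> C} * ((card C - 2) choose (t - 2))"
proof -
  have "finite C"
    using assms(5) card.infinite by fastforce
  have "{S \<in> cliques V E t. S \<subseteq> C} = {S. S \<subseteq> C \<and> card S = t}"
    using assms(2,3) unfolding cliques_def is_complete_on_def by blast
  then have "card {S \<in> cliques V E t. S \<subseteq> C} = card C choose t"
    using n_subsets[OF \<open>finite C\<close>] by simp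
  moreover have "card {e \<in> E. e \<subseteq> C} = card C choose 2"
    using edges_within_complete[OF sg assms(3)] n_subsets[OF \<open>finite C\<close>] by simp
  moreover have "Suc (card C - 1) = card C" "card C - 1 - 1 = card C - 2"
    using assms(5) by auto
  ultimately show ?thesis
    using Suc_choose_mult_choose_two[of t "card C - 1"] assms(4,5) by (simp add: mult.commute)
qed

lemma cliques_within_edge_weight:
  assumes sg: "simple_graph V E" and "C \<subseteq> V" "t \<ge> 3" "card C \<ge> t"
    and nbr: "\<forall>u\<in>C. \<exists>w\<in>C. adj E u w"
  shows "real (card {S \<in> cliques V E t. S \<subseteq> C})
      \<le> real (card {e \<in> E. e \<subseteq> C}) * edge_weight t (card C - 1)"
    and "real (card {S \<in> cliques V E t. S \<subseteq> C})
      = real (card {e \<in> E. e \<subseteq> C}) * edge_weight t (card C - 1) \<longleftrightarrow> is_complete_on E C"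
proof -
  let ?N = "card {S \<in> cliques V E t. S \<subseteq> C}" and ?M = "card {e \<in> E. e \<subseteq> C}"
    and ?K = "(card C - 2) choose (t - 2)"
  have "finite C"
    using assms(3,4) card.infinite by fastforce
  have pos: "real (t choose 2) > 0"
    using assms(3) by simp
  have "edge_weight t (card C - 1) = real ((card C - 1 - 1) choose (t - 2)) / real (t choose 2)"
    by (rule edge_weight_eq) (use assms(3,4) in auto)
  also have "card C - 1 - 1 = card C - 2"
    by simp
  finally have scaled: "real ?M * edge_weight t (card C - 1) = real (?M * ?K) / real (t choose 2)"
    by simp
  have "(t choose 2) * ?N \<le> ?M * ?K"
    using cliques_within_le[OF sg \<open>finite C\<close>] .
  then show "real ?N \<le> real ?M * edge_weight t (card C - 1)"
    unfolding scaled using pos by (simp add: le_divide_eq mult.commute flip: of_nat_mult)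
  have "(t choose 2) * ?N = ?M * ?K \<longleftrightarrow> is_complete_on E C"
    using cliques_within_less[OF sg \<open>finite C\<close> assms(3,4) nbr]
      cliques_within_complete[OF sg assms(2) _ _] assms(3,4) by fastforce
  then show "real ?N = real ?M * edge_weight t (card C - 1) \<longleftrightarrow> is_complete_on E C"
    unfolding scaled using pos by (simp add: eq_divide_eq mult.commute flip: of_nat_mult)
qed

section \<open>Closing a longest path into a cycle\<close>

lemma path_non_neighbour_of_hd:
  assumes sg: "simple_graph V E" and P: "is_path V E P" "2 \<le> length P"
    and deg: "2 * card (neighbours E (hd P)) \<le> length P - 1"
  obtains y where "y \<in> set P" "y \<noteq> hd P" "\<not> adj E (hd P) y"
proof -
  have "card (set P - {hd P}) = length P - 1"
    using P(1) unfolding is_path_def by (simp add: distinct_card)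
  then have "\<not> set P - {hd P} \<subseteq> neighbours E (hd P)"
    using card_mono[OF finite_neighbours[OF sg], of "set P - {hd P}" "hd P"] deg P(2) by linarith
  then show ?thesis
    using that unfolding neighbours_def by blast
qed

lemma neighbours_hd_longest_path:
  assumes sg: "simple_graph V E" and P: "is_longest_path V E P"
  shows "neighbours E (hd P) \<subseteq> (\<lambda>i. P ! Suc i) ` {i. i < length P - 1 \<and> adj E (hd P) (P ! Suc i)}"
proof
  fix z
  assume "z \<in> neighbours E (hd P)"
  then have z: "adj E (hd P) z"
    unfolding neighbours_def by simp
  then obtain i where "Suc i < length P" "P ! Suc i = z"
    using longest_path_hd_neighbour_nth[OF sg P] by blast
  then show "z \<in> (\<lambda>i. P ! Suc i) ` {i. i < length P - 1 \<and> adj E (hd P) (P ! Suc i)}"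
    using z by force
qed

lemma neighbours_last_longest_path:
  assumes sg: "simple_graph V E" and P: "is_longest_path V E P"
  shows "neighbours E (last P) \<subseteq> (\<lambda>i. P ! i) ` {i. i < length P - 1 \<and> adj E (last P) (P ! i)}"
proof
  fix z
  assume "z \<in> neighbours E (last P)"
  then have z: "adj E (last P) z"
    unfolding neighbours_def by simp
  have "P \<noteq> []"
    using P unfolding is_longest_path_def is_path_def by blast
  then have "z \<in> set P"
    using longest_path_hd_neighbour[OF sg is_longest_path_rev[OF P]] z by (simp add: hd_rev)
  then obtain j where j: "j < length P" "P ! j = z"
    by (meson in_set_conv_nth)
  have "j \<noteq> length P - 1"
    using j(2) adjD(3)[OF sg z] \<open>P \<noteq> []\<close> by (auto simp: last_conv_nth)
  then show "z \<in> (\<lambda>i. P ! i) ` {i. i < length P - 1 \<and> adj E (last P) (P ! i)}"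
    using j z by force
qed

lemma longest_path_crossing_neighbours:
  assumes sg: "simple_graph V E" and P: "is_longest_path V E P"
    and "length P - 1 < 2 * card (neighbours E (hd P))" "length P - 1 < 2 * card (neighbours E (last P))"
  obtains i where "Suc i < length P" "adj E (hd P) (P ! Suc i)" "adj E (last P) (P ! i)"
proof -
  define A where "A = {i. i < length P - 1 \<and> adj E (hd P) (P ! Suc i)}"
  define B where "B = {i. i < length P - 1 \<and> adj E (last P) (P ! i)}"
  have "finite A" "finite B"
    unfolding A_def B_def by auto
  have "neighbours E (hd P) \<subseteq> (\<lambda>i. P ! Suc i) ` A"
    unfolding A_def by (rule neighbours_hd_longest_path[OF sg P])
  then have "card (neighbours E (hd P)) \<le> card A"
    using card_mono[OF finite_imageI[OF \<open>finite A\<close>]] card_image_le[OF \<open>finite A\<close>] le_trans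
    by blast
  moreover have "neighbours E (last P) \<subseteq> (\<lambda>i. P ! i) ` B"
    unfolding B_def by (rule neighbours_last_longest_path[OF sg P])
  then have "card (neighbours E (last P)) \<le> card B"
    using card_mono[OF finite_imageI[OF \<open>finite B\<close>]] card_image_le[OF \<open>finite B\<close>] le_trans
    by blast
  moreover have "card (A \<union> B) \<le> length P - 1"
    using card_mono[of "{..<length P - 1}" "A \<union> B"] unfolding A_def B_def by fastforce
  ultimately have "A \<inter> B \<noteq> {}"
    using assms(3,4) card_Un_disjoint[OF \<open>finite A\<close> \<open>finite B\<close>] by linarith
  then show ?thesis
    using that unfolding A_def B_def by fastforce
qed

definition is_cycle :: "'a set set \<Rightarrow> 'a list \<Rightarrow> bool" where
  "is_cycle E cs \<longleftrightarrow> cs \<noteq> [] \<and> successively (adj E) (cs @ [hd cs])"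

lemma is_cycle_rotate: "is_cycle E (as @ w # bs) \<Longrightarrow> is_cycle E (w # bs @ as)"
  unfolding is_cycle_def
  by (cases as; cases bs) (auto simp: successively_append_iff successively_Cons hd_append)

lemma is_cycle_is_path: "is_cycle E cs \<Longrightarrow> distinct cs \<Longrightarrow> set cs \<subseteq> V \<Longrightarrow> is_path V E cs"
  unfolding is_cycle_def is_path_iff by (auto simp: successively_append_iff)

lemma is_cycle_closing_path:
  assumes P: "is_path V E P" and i: "Suc i < length P"
    and "adj E (hd P) (P ! Suc i)" "adj E (last P) (P ! i)"
  shows "is_cycle E (take (Suc i) P @ rev (drop (Suc i) P))"
proof -
  have P': "successively (adj E) P" "P \<noteq> []"
    using P unfolding is_path_iff by auto
  have s: "successively (adj E) (take (Suc i) P)" "successively (adj E) (drop (Suc i) P)"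
    using P'(1) by (metis append_take_drop_id successively_append_iff)+
  have ne: "take (Suc i) P \<noteq> []" "drop (Suc i) P \<noteq> []"
    using i by auto
  have ends: "last (take (Suc i) P) = P ! i" "hd (rev (drop (Suc i) P)) = last P"
      "last (rev (drop (Suc i) P)) = P ! Suc i"
    using i ne(2) by (simp_all add: take_Suc_conv_app_nth hd_rev last_rev hd_drop_conv_nth)
  have "successively (adj E) (rev (drop (Suc i) P) @ [hd P])"
    using s(2) ends(3) assms(3)
    by (simp add: successively_append_iff adj_commute cong: successively_cong)
  then have "successively (adj E) (take (Suc i) P @ rev (drop (Suc i) P) @ [hd P])"
    using s(1) ne ends(1,2) assms(4)
    by (simp add: successively_append_iff[of _ "take (Suc i) P"] adj_commute)
  then show ?thesis
    unfolding is_cycle_def using ne(1) by (simp add: hd_take)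
qed

lemma crossing_path_rotations:
  assumes P: "is_path V E P" and "Suc i < length P"
    and "adj E (hd P) (P ! Suc i)" "adj E (last P) (P ! i)" and w: "w \<in> set P"
  obtains Q where "is_path V E Q" "hd Q = w" "set Q = set P" "length Q = length P"
proof -
  let ?cs = "take (Suc i) P @ rev (drop (Suc i) P)"
  have "distinct P" "set P \<subseteq> V"
    using P unfolding is_path_def by auto
  then have cs: "distinct ?cs" "set ?cs = set P"
    by (metis append_take_drop_id distinct_append distinct_rev set_rev set_append)+
  then obtain as bs where split: "?cs = as @ w # bs"
    using w split_list by metis
  then have "is_cycle E (w # bs @ as)"
    using is_cycle_rotate is_cycle_closing_path[OF assms(1-4)] by metis
  moreover have "distinct (w # bs @ as)" "set (w # bs @ as) = set P"
    using cs split by auto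
  ultimately have "is_path V E (w # bs @ as)"
    using is_cycle_is_path \<open>set P \<subseteq> V\<close> by metis
  moreover have "length (w # bs @ as) = length P"
    using arg_cong[OF split, of length] by simp
  ultimately show ?thesis
    using that \<open>set (w # bs @ as) = set P\<close> by simp
qed

lemma hamiltonian_longest_path_component:
  assumes sg: "simple_graph V E" and P: "is_longest_path V E P" "length P \<ge> 2"
    and ham: "\<And>w. w \<in> set P \<Longrightarrow>
      \<exists>Q. is_path V E Q \<and> hd Q = w \<and> set Q = set P \<and> length Q = length P"
  shows "adj_closed E (set P)"
    and "\<forall>u\<in>set P. \<exists>w\<in>set P. adj E u w"
    and "\<And>e. e \<in> E \<Longrightarrow> e \<subseteq> set P \<Longrightarrow> longest_path_through V E e = length P - 1"
proof -
  have longest: "is_longest_path V E Q" if "is_path V E Q" "length Q = length P" for Q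
    using P(1) that unfolding is_longest_path_def by simp
  show "adj_closed E (set P)"
    unfolding adj_closed_def
  proof (intro allI impI)
    fix u v
    assume "adj E u v" "u \<in> set P"
    then obtain Q where Q: "is_path V E Q" "hd Q = u" "set Q = set P" "length Q = length P"
      using ham by blast
    then show "v \<in> set P"
      using longest_path_hd_neighbour[OF sg longest[OF Q(1,4)]] \<open>adj E u v\<close> by simp
  qed
  show "\<forall>u\<in>set P. \<exists>w\<in>set P. adj E u w"
  proof
    fix u
    assume "u \<in> set P"
    then obtain Q where Q: "is_path V E Q" "hd Q = u" "set Q = set P" "length Q = length P"
      using ham by blast
    then show "\<exists>w\<in>set P. adj E u w"
      using adj_hd_nth_1[OF Q(1)] P(2) nth_mem[of 1 Q] by auto
  qed
  fix e
  assume e: "e \<in> E" "e \<subseteq> set P"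
  then obtain u v where "e = {u, v}" "u \<in> set P"
    using edgeE[OF sg] by (metis insert_subset)
  then obtain Q where Q: "is_path V E Q" "hd Q = u" "set Q = set P" "length Q = length P"
    using ham by blast
  then have "length P - 1 \<le> longest_path_through V E e"
    using longest_path_through_at_hd[OF sg longest[OF Q(1,4)] e(1)] \<open>e = {u, v}\<close> by simp
  then show "longest_path_through V E e = length P - 1"
    using longest_path_through_le_longest[OF sg P(1) e(1)] by simp
qed

section \<open>Edge weights and the equality condition\<close>

definition weight_sum :: "'a set \<Rightarrow> 'a set set \<Rightarrow> nat \<Rightarrow> real" where
  "weight_sum V E t = (\<Sum>e\<in>E. edge_weight t (longest_path_through V E e))"

definition components_complete_or_short :: "'a set \<Rightarrow> 'a set set \<Rightarrow> nat \<Rightarrow> bool" where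
  "components_complete_or_short V E t \<longleftrightarrow>
     (\<forall>C\<in>components V E. is_complete_on E C \<or> \<not> has_path_of_length_in V E C (t - 1))"

lemma weight_sum_split:
  assumes "simple_graph V E"
  shows "weight_sum V E t
    = (\<Sum>e\<in>{e \<in> E. e \<inter> X \<noteq> {}}. edge_weight t (longest_path_through V E e))
      + (\<Sum>e\<in>edges_avoiding E X. edge_weight t (longest_path_through V E e))"
proof -
  let ?f = "\<lambda>e. edge_weight t (longest_path_through V E e)"
  have "sum ?f {e \<in> E. e \<inter> X \<noteq> {}} + sum ?f (edges_avoiding E X)
      = sum ?f ({e \<in> E. e \<inter> X \<noteq> {}} \<union> edges_avoiding E X)"
    using finite_edges[OF assms] unfolding edges_avoiding_def
    by (intro sum.union_disjoint[symmetric]) auto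
  also have "{e \<in> E. e \<inter> X \<noteq> {}} \<union> edges_avoiding E X = E"
    unfolding edges_avoiding_def by blast
  finally show ?thesis
    unfolding weight_sum_def by simp
qed

lemma weight_sum_remove_le:
  assumes sg: "simple_graph V E" and "t \<ge> 2"
  shows "weight_sum (V - X) (edges_avoiding E X) t
    \<le> (\<Sum>e\<in>edges_avoiding E X. edge_weight t (longest_path_through V E e))"
  unfolding weight_sum_def
proof (rule sum_mono)
  fix e
  assume e: "e \<in> edges_avoiding E X"
  show "edge_weight t (longest_path_through (V - X) (edges_avoiding E X) e)
      \<le> edge_weight t (longest_path_through V E e)"
    using edge_weight_mono[OF assms(2)] longest_path_through_ge_1[OF simple_graph_remove[OF sg] e]
      longest_path_through_remove_le[OF sg e] by blast
qed

lemma weight_sum_remove_closed: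
  assumes sg: "simple_graph V E" and closed: "adj_closed E C"
  shows "weight_sum V E t = (\<Sum>e\<in>{e \<in> E. e \<subseteq> C}. edge_weight t (longest_path_through V E e))
    + weight_sum (V - C) (edges_avoiding E C) t"
proof -
  have "{e \<in> E. e \<inter> C \<noteq> {}} = {e \<in> E. e \<subseteq> C}"
  proof (intro Collect_cong conj_cong refl)
    fix e
    assume e: "e \<in> E"
    then have "e \<noteq> {}"
      using sg unfolding simple_graph_def by auto
    then show "e \<inter> C \<noteq> {} \<longleftrightarrow> e \<subseteq> C"
      using edge_inside_or_outside[OF sg closed e] by auto
  qed
  then show ?thesis
    using weight_sum_split[OF sg, of t C] longest_path_through_remove_closed[OF sg closed]
    unfolding weight_sum_def by simp
qed

lemma weight_sum_remove_vertex_ge: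
  assumes sg: "simple_graph V E" and "t \<ge> 2" "1 \<le> L"
    and long: "\<And>e. e \<in> E \<Longrightarrow> x \<in> e \<Longrightarrow> L \<le> longest_path_through V E e"
  shows "real (card (neighbours E x)) * edge_weight t L + weight_sum (V - {x}) (edges_avoiding E {x}) t
    \<le> weight_sum V E t"
proof -
  have "real (card (neighbours E x)) * edge_weight t L
      = (\<Sum>e\<in>{e \<in> E. e \<inter> {x} \<noteq> {}}. edge_weight t L)"
    using card_edges_at[OF sg, of x] by simp
  also have "\<dots> \<le> (\<Sum>e\<in>{e \<in> E. e \<inter> {x} \<noteq> {}}. edge_weight t (longest_path_through V E e))"
    using edge_weight_mono[OF assms(2,3)] long by (intro sum_mono) auto
  finally show ?thesis
    using weight_sum_split[OF sg, of t "{x}"] weight_sum_remove_le[OF sg assms(2), of "{x}"]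
    by linarith
qed

lemma not_components_complete_or_short:
  assumes P: "is_path V E P" and "1 \<le> t" "t \<le> length P"
    and y: "y \<in> set P" "y \<noteq> hd P" "\<not> adj E (hd P) y"
  shows "\<not> components_complete_or_short V E t"
proof -
  define C where "C = {u \<in> V. (adj E)\<^sup>*\<^sup>* (hd P) u}"
  have "P \<noteq> []" "set P \<subseteq> V"
    using P unfolding is_path_def by auto
  then have "hd P \<in> V"
    by auto
  then have "C \<in> components V E"
    unfolding C_def components_def by (intro CollectI exI[of _ "hd P"]) simp
  moreover have "set P \<subseteq> C"
    using rtranclp_adj_hd_path[OF P] \<open>set P \<subseteq> V\<close> unfolding C_def by blast
  moreover have "\<not> is_complete_on E C"
  proof
    assume "is_complete_on E C"
    moreover have "hd P \<in> C" "y \<in> C"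
      using \<open>set P \<subseteq> C\<close> \<open>P \<noteq> []\<close> y(1) by auto
    ultimately have "adj E (hd P) y"
      using not_sym[OF y(2)] unfolding is_complete_on_def by blast
    then show False
      using y(3) by contradiction
  qed
  moreover have "has_path_of_length_in V E C (t - 1)"
    using has_path_of_length_in_take[OF P \<open>set P \<subseteq> C\<close> assms(2,3)] .
  ultimately show ?thesis
    unfolding components_complete_or_short_def by blast
qed

lemma components_complete_or_short_remove:
  assumes "components V E = insert C (components (V - C) (edges_avoiding E C))"
  shows "components_complete_or_short V E t \<longleftrightarrow>
    (is_complete_on E C \<or> \<not> has_path_of_length_in V E C (t - 1))
      \<and> components_complete_or_short (V - C) (edges_avoiding E C) t"
proof -
  have "is_complete_on (edges_avoiding E C) D \<longleftrightarrow> is_complete_on E D"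
    and "has_path_of_length_in (V - C) (edges_avoiding E C) D (t - 1)
      \<longleftrightarrow> has_path_of_length_in V E D (t - 1)"
    if "D \<in> components (V - C) (edges_avoiding E C)" for D
  proof -
    have "D \<subseteq> V - C"
      using that unfolding components_def by blast
    then show "is_complete_on (edges_avoiding E C) D \<longleftrightarrow> is_complete_on E D"
      unfolding is_complete_on_def by (auto simp: adj_edges_avoiding)
    show "has_path_of_length_in (V - C) (edges_avoiding E C) D (t - 1)
        \<longleftrightarrow> has_path_of_length_in V E D (t - 1)"
      using \<open>D \<subseteq> V - C\<close> unfolding has_path_of_length_in_def by (auto simp: is_path_remove)
  qed
  then show ?thesis
    unfolding components_complete_or_short_def assms by auto
qed

section \<open>The induction\<close>

definition clique_weight_bound :: "'a set \<Rightarrow> 'a set set \<Rightarrow> nat \<Rightarrow> bool" where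
  "clique_weight_bound V E t \<longleftrightarrow>
     real (card (cliques V E t)) \<le> weight_sum V E t \<and>
     (real (card (cliques V E t)) = weight_sum V E t \<longleftrightarrow> components_complete_or_short V E t)"

lemma no_long_path_bound:
  assumes sg: "simple_graph V E" and "t \<ge> 2" and short: "\<And>xs. is_path V E xs \<Longrightarrow> length xs < t"
  shows "cliques V E t = {}" "weight_sum V E t = 0" "components_complete_or_short V E t"
proof -
  show "cliques V E t = {}"
    using clique_is_path short assms(2) by fastforce
  have "edge_weight t (longest_path_through V E e) = 0" if "e \<in> E" for e
  proof -
    have "longest_path_through V E e \<le> t - 2"
      by (rule longest_path_through_le[OF sg that]) (use short in fastforce)
    then show ?thesis
      using edge_weight_eq_0 assms(2) by simp
  qed
  then show "weight_sum V E t = 0"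
    unfolding weight_sum_def by simp
  show "components_complete_or_short V E t"
    unfolding components_complete_or_short_def has_path_of_length_in_def
    using short assms(2) by fastforce
qed

lemma low_degree_end_bound:
  assumes sg: "simple_graph V E" and t: "t \<ge> 3" and P: "is_longest_path V E P" "t \<le> length P"
    and deg: "2 * card (neighbours E (hd P)) \<le> length P - 1"
    and IH: "real (card (cliques (V - {hd P}) (edges_avoiding E {hd P}) t))
      \<le> weight_sum (V - {hd P}) (edges_avoiding E {hd P}) t"
  shows "real (card (cliques V E t)) < weight_sum V E t"
    and "\<not> components_complete_or_short V E t"
proof -
  define x where "x = hd P"
  define d where "d = card (neighbours E x)"
  define L where "L = length P - 1"
  have path: "is_path V E P"
    using P unfolding is_longest_path_def by blast
  have "P ! 1 \<in> neighbours E x"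
    using adj_hd_nth_1[OF path] P(2) t unfolding x_def neighbours_def by simp
  then have "d \<ge> 1"
    using finite_neighbours[OF sg, of x] unfolding d_def by (auto simp: card_gt_0_iff Suc_le_eq)
  have "2 * d \<le> L" "t - 1 \<le> L"
    using deg P(2) unfolding d_def L_def x_def by auto
  have "real (card (cliques V E t))
      \<le> real (d choose (t - 1)) + real (card (cliques (V - {x}) (edges_avoiding E {x}) t))"
    using card_cliques_remove_vertex_le[OF sg, of t x] unfolding d_def
    by (simp only: of_nat_add[symmetric] of_nat_le_iff)
  also have "\<dots> < real d * edge_weight t L + weight_sum (V - {x}) (edges_avoiding E {x}) t"
    using choose_less_mult_edge_weight[OF t \<open>d \<ge> 1\<close> \<open>2 * d \<le> L\<close> \<open>t - 1 \<le> L\<close>] IH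
    unfolding x_def by linarith
  also have "\<dots> \<le> weight_sum V E t"
    using weight_sum_remove_vertex_ge[OF sg _ _ longest_path_through_at_hd[OF sg P(1)]] t \<open>t - 1 \<le> L\<close>
    unfolding d_def L_def x_def by simp
  finally show "real (card (cliques V E t)) < weight_sum V E t" .
  obtain y where "y \<in> set P" "y \<noteq> hd P" "\<not> adj E (hd P) y"
    using path_non_neighbour_of_hd[OF sg path] P(2) t deg by auto
  then show "\<not> components_complete_or_short V E t"
    using not_components_complete_or_short[OF path] t P(2) by simp
qed

lemma hamiltonian_component_bound:
  assumes sg: "simple_graph V E" and t: "t \<ge> 3" and P: "is_longest_path V E P" "t \<le> length P"
    and ham: "\<And>w. w \<in> set P \<Longrightarrow>
      \<exists>Q. is_path V E Q \<and> hd Q = w \<and> set Q = set P \<and> length Q = length P"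
    and IH: "clique_weight_bound (V - set P) (edges_avoiding E (set P)) t"
  shows "clique_weight_bound V E t"
proof -
  define C where "C = set P"
  define V' where "V' = V - C"
  define E' where "E' = edges_avoiding E C"
  define L where "L = length P - 1"
  have path: "is_path V E P"
    using P(1) unfolding is_longest_path_def by blast
  then have "P \<noteq> []" "C \<subseteq> V" "card C = length P"
    unfolding is_path_def C_def by (auto simp: distinct_card)
  have "finite V"
    using sg unfolding simple_graph_def by blast
  note comp = hamiltonian_longest_path_component[OF sg P(1) _ ham, folded C_def]
  have closed: "adj_closed E C"
    using comp(1) t P(2) by simp
  have N: "real (card (cliques V E t))
      = real (card {S \<in> cliques V E t. S \<subseteq> C}) + real (card (cliques V' E' t))"
    using card_cliques_remove_closed[OF \<open>finite V\<close> closed, of t] t unfolding V'_def E'_def by simp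
  have W: "weight_sum V E t = real (card {e \<in> E. e \<subseteq> C}) * edge_weight t L + weight_sum V' E' t"
    using weight_sum_remove_closed[OF sg closed, of t] comp(3) t P(2)
    unfolding V'_def E'_def L_def C_def by simp
  have "L = card C - 1"
    unfolding L_def using \<open>card C = length P\<close> by simp
  then have within_le: "real (card {S \<in> cliques V E t. S \<subseteq> C})
        \<le> real (card {e \<in> E. e \<subseteq> C}) * edge_weight t L"
    and within_eq: "real (card {S \<in> cliques V E t. S \<subseteq> C})
        = real (card {e \<in> E. e \<subseteq> C}) * edge_weight t L \<longleftrightarrow> is_complete_on E C"
    using cliques_within_edge_weight[OF sg \<open>C \<subseteq> V\<close> t _ comp(2)] P(2) t \<open>card C = length P\<close>
    by simp_all
  have "components V E = insert C (components V' E')"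
    using components_remove_closed[OF closed \<open>C \<subseteq> V\<close>, of "hd P"] rtranclp_adj_hd_path[OF path]
      \<open>P \<noteq> []\<close> unfolding V'_def E'_def C_def by simp
  moreover have "has_path_of_length_in V E C (t - 1)"
    using has_path_of_length_in_take[OF path _ _ P(2)] t unfolding C_def by simp
  ultimately have "components_complete_or_short V E t
      \<longleftrightarrow> is_complete_on E C \<and> components_complete_or_short V' E' t"
    using components_complete_or_short_remove unfolding V'_def E'_def by blast
  moreover have "real (card (cliques V E t)) = weight_sum V E t \<longleftrightarrow>
      real (card {S \<in> cliques V E t. S \<subseteq> C}) = real (card {e \<in> E. e \<subseteq> C}) * edge_weight t L
      \<and> real (card (cliques V' E' t)) = weight_sum V' E' t"
    using N W within_le IH unfolding V'_def E'_def C_def clique_weight_bound_def by linarith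
  ultimately show ?thesis
    using N W within_le within_eq IH unfolding V'_def E'_def C_def clique_weight_bound_def
    by linarith
qed

lemma longest_path_bound:
  assumes sg: "simple_graph V E" and t: "t \<ge> 3" and P: "is_longest_path V E P" "t \<le> length P"
    and IH: "\<And>X. X \<subseteq> V \<Longrightarrow> X \<noteq> {} \<Longrightarrow> clique_weight_bound (V - X) (edges_avoiding E X) t"
  shows "clique_weight_bound V E t"
proof -
  have path: "is_path V E P"
    using P unfolding is_longest_path_def by blast
  then have "P \<noteq> []" "set P \<subseteq> V"
    unfolding is_path_def by auto
  then have "{hd P} \<subseteq> V" "{last P} \<subseteq> V" "hd (rev P) = last P"
    by (auto simp: hd_rev)
  consider "2 * card (neighbours E (hd P)) \<le> length P - 1"
    | "2 * card (neighbours E (last P)) \<le> length P - 1"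
    | "length P - 1 < 2 * card (neighbours E (hd P))" "length P - 1 < 2 * card (neighbours E (last P))"
    by linarith
  then show ?thesis
  proof cases
    case 1
    note low = low_degree_end_bound[OF sg t P 1]
    show ?thesis
      using low IH[OF \<open>{hd P} \<subseteq> V\<close>] unfolding clique_weight_bound_def
      by (simp add: less_imp_le less_imp_neq)
  next
    case 2
    note low = low_degree_end_bound[OF sg t is_longest_path_rev[OF P(1)],
        unfolded length_rev \<open>hd (rev P) = last P\<close>, OF P(2) 2]
    show ?thesis
      using low IH[OF \<open>{last P} \<subseteq> V\<close>] unfolding clique_weight_bound_def
      by (simp add: less_imp_le less_imp_neq)
  next
    case 3
    then obtain i where i: "Suc i < length P" "adj E (hd P) (P ! Suc i)" "adj E (last P) (P ! i)"
      using longest_path_crossing_neighbours[OF sg P(1)] by blast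
    have "\<exists>Q. is_path V E Q \<and> hd Q = w \<and> set Q = set P \<and> length Q = length P"
      if "w \<in> set P" for w
      using crossing_path_rotations[OF path i that] by blast
    moreover have "set P \<noteq> {}"
      using \<open>P \<noteq> []\<close> by simp
    ultimately show ?thesis
      using hamiltonian_component_bound[OF sg t P] IH[OF \<open>set P \<subseteq> V\<close>] by blast
  qed
qed

lemma clique_bound:
  assumes "t \<ge> 3" "simple_graph V E"
  shows "clique_weight_bound V E t"
  using assms(2)
proof (induction "card V" arbitrary: V E rule: less_induct)
  case less
  show ?case
  proof (cases "\<exists>xs. is_path V E xs \<and> t \<le> length xs")
    case False
    then have "\<And>xs. is_path V E xs \<Longrightarrow> length xs < t"
      by fastforce
    from no_long_path_bound[OF less.prems _ this] assms(1) show ?thesis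
      unfolding clique_weight_bound_def by simp
  next
    case True
    then obtain ys where "is_path V E ys" "t \<le> length ys"
      by blast
    then obtain P where P: "is_longest_path V E P"
      using longest_path_exists[OF less.prems] by blast
    then have "t \<le> length P"
      using \<open>is_path V E ys\<close> \<open>t \<le> length ys\<close> unfolding is_longest_path_def by (meson le_trans)
    show ?thesis
    proof (rule longest_path_bound[OF less.prems assms(1) P \<open>t \<le> length P\<close>])
      fix X
      assume "X \<subseteq> V" "X \<noteq> {}"
      then have "card (V - X) < card V"
        using less.prems unfolding simple_graph_def by (intro psubset_card_mono) auto
      then show "clique_weight_bound (V - X) (edges_avoiding E X) t"
        using less.hyps simple_graph_remove[OF less.prems] by blast
    qed
  qed
qed

theorem theorem3:
  fixes V :: "'a set" and E :: "'a set set" and t :: nat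
  assumes "t \<ge> 2" and "simple_graph V E"
  defines "p \<equiv> longest_path_through V E"
  shows "(real (clique_count V E t)
           \<le> (\<Sum>e\<in>E. real (Suc (p e) choose t) / real (Suc (p e) choose 2)))
    \<and> ((\<Sum>e\<in>E. real (Suc (p e) choose t) / real (Suc (p e) choose 2))
           = (1 / real (t choose 2)) * (\<Sum>e\<in>E. real ((p e - 1) choose (t - 2))))
    \<and> (t = 2 \<longrightarrow> real (clique_count V E t)
           = (\<Sum>e\<in>E. real (Suc (p e) choose t) / real (Suc (p e) choose 2)))
    \<and> (t \<ge> 3 \<longrightarrow>
           (real (clique_count V E t)
              = (\<Sum>e\<in>E. real (Suc (p e) choose t) / real (Suc (p e) choose 2)))
           \<longleftrightarrow> (\<forall>C\<in>components V E. is_complete_on E C \<or> \<not> has_path_of_length_in V E C (t - 1)))"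
proof -
  have p: "1 \<le> p e" if "e \<in> E" for e
    unfolding p_def using longest_path_through_ge_1[OF assms(2) that] .
  have sum_eq: "(\<Sum>e\<in>E. real (Suc (p e) choose t) / real (Suc (p e) choose 2)) = weight_sum V E t"
    unfolding weight_sum_def edge_weight_def p_def ..
  have "(\<Sum>e\<in>E. real (Suc (p e) choose t) / real (Suc (p e) choose 2))
      = (\<Sum>e\<in>E. real ((p e - 1) choose (t - 2)) / real (t choose 2))"
    using edge_weight_eq[OF assms(1)] p unfolding edge_weight_def by (intro sum.cong) auto
  then have rewritten: "(\<Sum>e\<in>E. real (Suc (p e) choose t) / real (Suc (p e) choose 2))
      = (1 / real (t choose 2)) * (\<Sum>e\<in>E. real ((p e - 1) choose (t - 2)))"
    by (simp add: sum_divide_distrib)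
  have "real (clique_count V E 2) = weight_sum V E 2"
    using edge_weight_two p cliques_two[OF assms(2)]
    unfolding clique_count_eq_card_cliques weight_sum_def p_def by simp
  moreover have "t \<ge> 3 \<Longrightarrow> real (clique_count V E t) \<le> weight_sum V E t
      \<and> (real (clique_count V E t) = weight_sum V E t \<longleftrightarrow> components_complete_or_short V E t)"
    using clique_bound[OF _ assms(2)] unfolding clique_count_eq_card_cliques clique_weight_bound_def .
  ultimately show ?thesis
    using rewritten assms(1) unfolding sum_eq components_complete_or_short_def
    by (cases "t = 2") (simp_all add: eval_nat_numeral)
qed

end
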